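(* Let $M_0=\mathbb A^2$ with coordinates $(x,y)$, $l_x=\{x=0\}$, $c_1=(0,0)$, and let $M_\ell\to\dots\to M_1\to M_0$ be the sequence of blow-ups where $M_j\to M_{j-1}$ blows up the point $c_j$, with $c_1=(0,0)$ and, for $j\ge2$, $c_j$ the intersection of the strict transform of $l_x$ in $M_{j-1}$ with the exceptional divisor of $M_{j-1}\to M_{j-2}$. Let $P=(m_1\ge\dots\ge m_\ell)$ be a partition of $r$ and let $X\subset M_0$ be the curve $F(x,y)=y^r+s_1(x)y^{r-1}+\dots+s_r(x)=0$, $s_\mu\in\mathbb C[x]$. The following are equivalent: (1) $X$ passes through $c_1$ with multiplicity at least $m_1$, and for $j=2,\dots,\ell$ the total transform of $X$ in $M_{j-1}$ passes through $c_j$ with multiplicity at least $m_1+\dots+m_j$; (2) for all $1\le\mu\le r$, the vanishing order of $s_\mu$ at $x=0$ is at least $\gamma_P(\mu)$; (3) $\partial_y^u\partial_x^aF(0,0)=0$ for all $(u,a)\in G(P)$.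
   Context: Level function $\gamma_P$ of a partition $P=(m_1\ge\dots\ge m_\ell)$ of $r$: number the boxes of its Young diagram (row $j$ has $m_j$ boxes) by $1,\dots,r$, top to bottom within each column, columns left to right; $\gamma_P(k)$ is the column index of box $k$. Level domain: $G(P)=\{(u,a)\in\mathbb Z^2:0\le u<r,\ 0\le a<\gamma_P(r-u)\}$. *)

theory Defs
  imports "HOL-Computational_Algebra.Polynomial"
begin

text \<open>Bivariate polynomials over the complex numbers are represented as
  complex poly poly: the outer variable is the second coordinate (y, resp. v),
  the inner variable is the first coordinate (x, resp. u).
  So the coefficient of x^a y^b in F is coeff (coeff F b) a.\<close>

definition is_partition :: "nat list \<Rightarrow> nat \<Rightarrow> bool" where
  "is_partition ms r \<longleftrightarrow> sorted_wrt (\<ge>) ms \<and> (\<forall>m\<in>set ms. 0 < m) \<and> sum_list ms = r"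

text \<open>Height of column c (c >= 1) of the Young diagram: number of rows j with m_j >= c.\<close>
definition col_height :: "nat list \<Rightarrow> nat \<Rightarrow> nat" where
  "col_height ms c = length (filter (\<lambda>m. c \<le> m) ms)"

text \<open>Level function: boxes numbered top-to-bottom in each column, columns left
  to right; gamma ms k is the column index of box k (for 1 <= k <= r).\<close>
definition gamma :: "nat list \<Rightarrow> nat \<Rightarrow> nat" where
  "gamma ms k = (LEAST c. k \<le> (\<Sum>c'=1..c. col_height ms c'))"

definition levelG :: "nat list \<Rightarrow> (nat \<times> nat) set" where
  "levelG ms = {(u, a). u < sum_list ms \<and> a < gamma ms (sum_list ms - u)}"

definition curveF :: "nat \<Rightarrow> (nat \<Rightarrow> complex poly) \<Rightarrow> complex poly poly" where
  "curveF r s = monom 1 r + (\<Sum>\<mu>=1..r. monom (s \<mu>) (r - \<mu>))"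

text \<open>Total transform of G in the chart of M_k containing c_(k+1): after k blow-ups
  as described, the chart centered at c_(k+1) (origin) has coordinates (u,v) with
  x = u v^k, y = v (v = 0 is the last exceptional divisor, u = 0 the strict
  transform of l_x).\<close>
definition pullback :: "nat \<Rightarrow> complex poly poly \<Rightarrow> complex poly poly" where
  "pullback k G =
     poly (map_poly (\<lambda>C. poly (map_poly (\<lambda>c. [:[:c:]:]) C) (monom [:0, 1:] k)) G) (monom 1 1)"

definition mult0 :: "complex poly poly \<Rightarrow> nat" where
  "mult0 G = (LEAST d. \<exists>a b. a + b = d \<and> coeff (coeff G b) a \<noteq> 0)"

definition dpartial0 :: "nat \<Rightarrow> nat \<Rightarrow> complex poly poly \<Rightarrow> complex" where
  "dpartial0 u a G = poly (poly ((pderiv ^^ u) (map_poly (pderiv ^^ a) G)) 0) 0"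

end

theory Submission
  imports Defs
begin

text \<open>The chart map (u, v) |-> (u v^k, v) sends the monomial x^a y^b to u^a v^(k a + b),
  so the multiplicity of the total transform at c_(k+1) is the least value of (k + 1) a + b
  over the monomials of F. For the coefficient of x^a in s_mu (so b = r - mu), condition (1)
  says m_1 + ... + m_j + mu <= j a + r, i.e. mu <= j a + m_(j+1) + ... + m_l, for every j.
  As the parts decrease, the right-hand side is smallest when j is the number of parts
  >= a, where it equals the sum of the min m_i a, the number of boxes in the first a columns
  of the Young diagram; and mu is at most that number exactly when gamma_P(mu) <= a.
  Condition (3) is (2) read off coefficientwise, since the derivative d_y^u d_x^a F(0,0) is
  u! a! times the coefficient of x^a y^u.\<close>

lemma poly_map_poly_eq_sum:
  assumes "f 0 = 0"
  shows "poly (map_poly f p) (x::'a::comm_semiring_1) = (\<Sum>i\<le>degree p. f (coeff p i) * x ^ i)"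
proof -
  have "map_poly f p = (\<Sum>i\<le>degree p. monom (f (coeff p i)) i)"
    using poly_as_sum_of_monoms'[OF map_poly_degree_leq, of f p] assms by (simp add: coeff_map_poly)
  then show ?thesis
    by (simp add: poly_sum poly_monom)
qed

lemma pullback_as_sum_of_monoms:
  "pullback k G = (\<Sum>b\<le>degree G. \<Sum>a\<le>degree (coeff G b).
     monom (monom (coeff (coeff G b) a) a) (k * a + b))"
proof -
  have "[:[:c:]:] * monom [:0, 1:] k ^ a = monom (monom c a) (k * a)" for c :: complex and a
    by (simp add: monom_power smult_monom flip: monom_altdef)
  then have inner: "poly (map_poly (\<lambda>c. [:[:c:]:]) C) (monom [:0, 1:] k) =
      (\<Sum>a\<le>degree C. monom (monom (coeff C a) a) (k * a))" for C :: "complex poly"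
    by (simp add: poly_map_poly_eq_sum)
  show ?thesis
    unfolding pullback_def
    by (simp add: poly_map_poly_eq_sum inner monom_power sum_distrib_right mult_monom)
qed

lemma coeff_coeff_pullback:
  "coeff (coeff (pullback k G) e) a =
     (if k * a \<le> e then coeff (coeff G (e - k * a)) a else 0)"
proof -
  have "coeff (coeff (pullback k G) e) a =
      (\<Sum>b\<le>degree G. \<Sum>a'\<le>degree (coeff G b).
         if a' = a then (if k * a + b = e then coeff (coeff G b) a else 0) else 0)"
    unfolding pullback_as_sum_of_monoms coeff_sum by (intro sum.cong refl) auto
  also have "\<dots> = (\<Sum>b\<le>degree G. if b = e - k * a then
       (if k * a \<le> e then coeff (coeff G b) a else 0) else 0)"
    by (intro sum.cong refl) (auto simp: coeff_eq_0)
  also have "\<dots> = (if k * a \<le> e then coeff (coeff G (e - k * a)) a else 0)"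
    by (auto simp: coeff_eq_0)
  finally show ?thesis .
qed

lemma coeff_coeff_pullback_shift:
  "coeff (coeff (pullback k G) (k * a + b)) a = coeff (coeff G b) a"
  by (simp add: coeff_coeff_pullback)

lemma le_mult0_iff:
  assumes "G \<noteq> 0"
  shows "M \<le> mult0 G \<longleftrightarrow> (\<forall>a b. coeff (coeff G b) a \<noteq> 0 \<longrightarrow> M \<le> a + b)"
proof -
  obtain a0 b0 where nz: "coeff (coeff G b0) a0 \<noteq> 0"
    using assms by (metis leading_coeff_neq_0)
  have "\<exists>a b. a + b = mult0 G \<and> coeff (coeff G b) a \<noteq> 0"
    unfolding mult0_def by (rule LeastI[of _ "a0 + b0"]) (use nz in blast)
  moreover have "mult0 G \<le> a + b" if "coeff (coeff G b) a \<noteq> 0" for a b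
    unfolding mult0_def by (rule Least_le) (use that in blast)
  ultimately show ?thesis
    by (metis order_trans)
qed

lemma le_mult0_pullback_iff:
  assumes "G \<noteq> 0"
  shows "M \<le> mult0 (pullback k G) \<longleftrightarrow>
    (\<forall>a b. coeff (coeff G b) a \<noteq> 0 \<longrightarrow> M \<le> (k + 1) * a + b)"
proof -
  have "pullback k G \<noteq> 0"
    using assms coeff_coeff_pullback_shift by (metis coeff_0 leading_coeff_neq_0)
  moreover have "(\<forall>a e. coeff (coeff (pullback k G) e) a \<noteq> 0 \<longrightarrow> M \<le> a + e) \<longleftrightarrow>
      (\<forall>a b. coeff (coeff G b) a \<noteq> 0 \<longrightarrow> M \<le> (k + 1) * a + b)"
  proof (intro iffI allI impI)
    fix a b assume "\<forall>a e. coeff (coeff (pullback k G) e) a \<noteq> 0 \<longrightarrow> M \<le> a + e"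
      and "coeff (coeff G b) a \<noteq> 0"
    then have "M \<le> a + (k * a + b)"
      using coeff_coeff_pullback_shift[of k G a b] by metis
    then show "M \<le> (k + 1) * a + b"
      by simp
  next
    fix a e assume "\<forall>a b. coeff (coeff G b) a \<noteq> 0 \<longrightarrow> M \<le> (k + 1) * a + b"
      and "coeff (coeff (pullback k G) e) a \<noteq> 0"
    then show "M \<le> a + e"
      by (fastforce simp: coeff_coeff_pullback split: if_splits)
  qed
  ultimately show ?thesis
    by (simp add: le_mult0_iff)
qed

lemma coeff_curveF:
  "coeff (curveF r s) b = (if b = r then 1 else if b < r then s (r - b) else 0)"
proof -
  have "(\<Sum>\<mu>=1..r. coeff (monom (s \<mu>) (r - \<mu>)) b) =
      (\<Sum>\<mu>=1..r. if \<mu> = r - b \<and> b < r then s \<mu> else 0)"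
    by (intro sum.cong) auto
  then show ?thesis
    unfolding curveF_def by (auto simp: coeff_sum)
qed

lemma all_less_iff_ball_diff:
  "(\<forall>u<r. P u) \<longleftrightarrow> (\<forall>\<mu>\<in>{1..r}. P (r - \<mu> :: nat))"
proof
  assume "\<forall>\<mu>\<in>{1..r}. P (r - \<mu>)"
  moreover have "r - u \<in> {1..r}" "r - (r - u) = u" if "u < r" for u
    using that by auto
  ultimately show "\<forall>u<r. P u"
    by metis
qed auto

lemma le_mult0_pullback_curveF_iff:
  "M \<le> mult0 (pullback k (curveF r s)) \<longleftrightarrow>
     M \<le> r \<and> (\<forall>\<mu>\<in>{1..r}. \<forall>a. coeff (s \<mu>) a \<noteq> 0 \<longrightarrow> M + \<mu> \<le> (k + 1) * a + r)"
proof -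
  have "curveF r s \<noteq> 0"
    by (metis coeff_curveF coeff_0 one_neq_zero)
  moreover have "(\<forall>a b. coeff (coeff (curveF r s) b) a \<noteq> 0 \<longrightarrow> M \<le> (k + 1) * a + b) \<longleftrightarrow>
      M \<le> r \<and> (\<forall>b<r. \<forall>a. coeff (s (r - b)) a \<noteq> 0 \<longrightarrow> M \<le> (k + 1) * a + b)"
    by (auto simp: coeff_curveF)
  moreover have "(\<forall>b<r. \<forall>a. coeff (s (r - b)) a \<noteq> 0 \<longrightarrow> M \<le> (k + 1) * a + b) \<longleftrightarrow>
      (\<forall>\<mu>\<in>{1..r}. \<forall>a. coeff (s \<mu>) a \<noteq> 0 \<longrightarrow> M + \<mu> \<le> (k + 1) * a + r)"
    unfolding all_less_iff_ball_diff by (intro ball_cong all_cong refl) auto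
  ultimately show ?thesis
    by (simp add: le_mult0_pullback_iff)
qed

lemma dpartial0_eq_coeff:
  "dpartial0 u a G = fact u * fact a * coeff (coeff G u) a"
proof -
  have higher_pderiv_0: "coeff ((pderiv ^^ n) p) 0 = fact n * coeff p n"
    for n and p :: "'b::{idom,ring_char_0} poly"
    by (simp add: coeff_higher_pderiv pochhammer_fact)
  have fact_poly: "(fact n :: 'b::{idom,ring_char_0} poly) = [:fact n:]" for n
    by (metis of_nat_fact of_nat_poly)
  show ?thesis
    unfolding dpartial0_def poly_0_coeff_0 higher_pderiv_0 fact_poly
    by (simp add: coeff_map_poly higher_pderiv_0)
qed

lemma x_power_dvd_iff:
  "[:0, 1:] ^ n dvd (p :: 'a::comm_ring_1 poly) \<longleftrightarrow> (\<forall>k<n. coeff p k = 0)"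
  using monom_1_dvd_iff'[of n p] by (simp add: monom_altdef)

lemma sum_col_height_eq_sum_min:
  "(\<Sum>c'=1..c. col_height ms c') = (\<Sum>m\<leftarrow>ms. min m c)"
proof (induction ms)
  case (Cons m ms)
  have "(\<Sum>c'=1..c. if c' \<le> m then 1 else 0 :: nat) = card {c' \<in> {1..c}. c' \<le> m}"
    by (simp add: sum.If_cases Int_def)
  also have "{c' \<in> {1..c}. c' \<le> m} = {1..min m c}"
    by auto
  moreover have "col_height (m # ms) c' = (if c' \<le> m then 1 else 0) + col_height ms c'" for c'
    by (simp add: col_height_def)
  ultimately show ?case
    using Cons by (simp add: sum.distrib)
qed (simp add: col_height_def)

lemma gamma_le_iff:
  assumes "\<mu> \<le> sum_list ms"
  shows "gamma ms \<mu> \<le> a \<longleftrightarrow> \<mu> \<le> (\<Sum>m\<leftarrow>ms. min m a)"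
proof
  have "(\<Sum>m\<leftarrow>ms. min m (sum_list ms)) = sum_list ms"
    by (intro arg_cong[where f = sum_list] map_idI) (simp add: member_le_sum_list)
  then have "\<mu> \<le> (\<Sum>c'=1..sum_list ms. col_height ms c')"
    unfolding sum_col_height_eq_sum_min using assms by simp
  then have "\<mu> \<le> (\<Sum>c'=1..gamma ms \<mu>. col_height ms c')"
    unfolding gamma_def by (rule LeastI)
  moreover assume "gamma ms \<mu> \<le> a"
  ultimately show "\<mu> \<le> (\<Sum>m\<leftarrow>ms. min m a)"
    unfolding sum_col_height_eq_sum_min
    by (meson min.mono order.refl order_trans sum_list_mono)
next
  assume "\<mu> \<le> (\<Sum>m\<leftarrow>ms. min m a)"
  then show "gamma ms \<mu> \<le> a"
    unfolding gamma_def sum_col_height_eq_sum_min by (rule Least_le)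
qed

lemma sorted_wrt_ge_dropWhile_less:
  "sorted_wrt (\<ge>) xs \<Longrightarrow> x \<in> set (dropWhile (\<lambda>m. a \<le> m) xs) \<Longrightarrow> x < (a::nat)"
  by (induction xs) (auto split: if_splits)

lemma le_sum_list_min_iff:
  assumes "sorted_wrt (\<ge>) ms"
  shows "\<mu> \<le> (\<Sum>m\<leftarrow>ms. min m a) \<longleftrightarrow> (\<forall>j\<le>length ms. \<mu> \<le> j * a + sum_list (drop j ms))"
proof
  assume \<mu>: "\<mu> \<le> (\<Sum>m\<leftarrow>ms. min m a)"
  show "\<forall>j\<le>length ms. \<mu> \<le> j * a + sum_list (drop j ms)"
  proof (intro allI impI)
    fix j assume "j \<le> length ms"
    have "(\<Sum>m\<leftarrow>ms. min m a) = (\<Sum>m\<leftarrow>take j ms. min m a) + (\<Sum>m\<leftarrow>drop j ms. min m a)"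
      by (metis append_take_drop_id map_append sum_list_append)
    also have "\<dots> \<le> (\<Sum>m\<leftarrow>take j ms. a) + (\<Sum>m\<leftarrow>drop j ms. m)"
      by (intro add_mono sum_list_mono) auto
    also have "\<dots> = j * a + sum_list (drop j ms)"
      using \<open>j \<le> length ms\<close> by (simp add: sum_list_triv)
    finally show "\<mu> \<le> j * a + sum_list (drop j ms)"
      using \<mu> by linarith
  qed
next
  define j where "j = length (takeWhile (\<lambda>m. a \<le> m) ms)"
  assume "\<forall>j\<le>length ms. \<mu> \<le> j * a + sum_list (drop j ms)"
  then have "\<mu> \<le> j * a + sum_list (drop j ms)"
    by (simp add: j_def length_takeWhile_le)
  also have "\<dots> = (\<Sum>m\<leftarrow>take j ms. min m a) + (\<Sum>m\<leftarrow>drop j ms. min m a)"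
  proof -
    have "(\<Sum>m\<leftarrow>take j ms. min m a) = (\<Sum>m\<leftarrow>take j ms. a)"
      unfolding j_def takeWhile_eq_take[symmetric]
      by (intro arg_cong[where f = sum_list] map_cong) (auto dest: set_takeWhileD)
    moreover have "(\<Sum>m\<leftarrow>drop j ms. min m a) = sum_list (drop j ms)"
      unfolding j_def dropWhile_eq_drop[symmetric]
      by (intro arg_cong[where f = sum_list] map_idI)
        (auto dest: sorted_wrt_ge_dropWhile_less[OF assms])
    ultimately show ?thesis
      by (simp add: sum_list_triv j_def length_takeWhile_le min_absorb1)
  qed
  also have "\<dots> = (\<Sum>m\<leftarrow>ms. min m a)"
    by (metis append_take_drop_id map_append sum_list_append)
  finally show "\<mu> \<le> (\<Sum>m\<leftarrow>ms. min m a)" .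
qed

lemma gamma_le_iff_staircase:
  assumes "is_partition ms r" and "\<mu> \<le> r"
  shows "gamma ms \<mu> \<le> a \<longleftrightarrow> (\<forall>j\<in>{1..length ms}. sum_list (take j ms) + \<mu> \<le> j * a + r)"
proof -
  have sorted: "sorted_wrt (\<ge>) ms" and r: "r = sum_list ms"
    using assms(1) by (auto simp: is_partition_def)
  have "sum_list (take j ms) + \<mu> \<le> j * a + r \<longleftrightarrow> \<mu> \<le> j * a + sum_list (drop j ms)" for j
    unfolding r by (subst (2) append_take_drop_id[of j ms, symmetric], subst sum_list_append) linarith
  moreover have "\<mu> \<le> 0 * a + sum_list (drop 0 ms)"
    using assms(2) r by simp
  ultimately have "(\<forall>j\<in>{1..length ms}. sum_list (take j ms) + \<mu> \<le> j * a + r) \<longleftrightarrow>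
      (\<forall>j\<le>length ms. \<mu> \<le> j * a + sum_list (drop j ms))"
    by (auto simp: Ball_def) (metis Suc_leI drop_0 mult_0 neq0_conv plus_nat.add_0)
  also have "\<dots> \<longleftrightarrow> gamma ms \<mu> \<le> a"
    using assms(2) r by (simp add: le_sum_list_min_iff[OF sorted] gamma_le_iff)
  finally show ?thesis ..
qed

lemma pullback_multiplicities_iff:
  assumes "is_partition ms r"
  shows "(\<forall>j\<in>{1..length ms}. (\<Sum>i<j. ms ! i) \<le> mult0 (pullback (j - 1) (curveF r s))) \<longleftrightarrow>
    (\<forall>\<mu>\<in>{1..r}. \<forall>a. coeff (s \<mu>) a \<noteq> 0 \<longrightarrow> gamma ms \<mu> \<le> a)"
proof -
  have take_le: "sum_list (take j ms) \<le> r" for j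
    using assms by (metis append_take_drop_id is_partition_def le_add1 sum_list_append)
  have partial_sum: "(\<Sum>i<j. ms ! i) = sum_list (take j ms)" if "j \<le> length ms" for j
    using that by (simp add: sum_list_sum_nth atLeast0LessThan)
  have "(\<Sum>i<j. ms ! i) \<le> mult0 (pullback (j - 1) (curveF r s)) \<longleftrightarrow>
      (\<forall>\<mu>\<in>{1..r}. \<forall>a. coeff (s \<mu>) a \<noteq> 0 \<longrightarrow> sum_list (take j ms) + \<mu> \<le> j * a + r)"
    if "j \<in> {1..length ms}" for j
    using that take_le by (simp add: partial_sum le_mult0_pullback_curveF_iff)
  then show ?thesis
    using gamma_le_iff_staircase[OF assms] by auto
qed

lemma levelG_dpartial0_curveF_iff:
  assumes "sum_list ms = r"
  shows "(\<forall>(u, a)\<in>levelG ms. dpartial0 u a (curveF r s) = 0) \<longleftrightarrow>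
    (\<forall>\<mu>\<in>{1..r}. \<forall>a<gamma ms \<mu>. coeff (s \<mu>) a = 0)"
proof -
  have "(\<forall>(u, a)\<in>levelG ms. dpartial0 u a (curveF r s) = 0) \<longleftrightarrow>
      (\<forall>u<r. \<forall>a<gamma ms (r - u). coeff (s (r - u)) a = 0)"
    using assms by (auto simp: levelG_def dpartial0_eq_coeff coeff_curveF)
  also have "\<dots> \<longleftrightarrow> (\<forall>\<mu>\<in>{1..r}. \<forall>a<gamma ms \<mu>. coeff (s \<mu>) a = 0)"
    unfolding all_less_iff_ball_diff by (intro ball_cong refl) auto
  finally show ?thesis .
qed

theorem mainTheorem18:
  fixes ms :: "nat list" and r :: nat and s :: "nat \<Rightarrow> complex poly"
  assumes "is_partition ms r"
  defines "F \<equiv> curveF r s"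
  shows "((\<forall>j\<in>{1..length ms}. (\<Sum>i<j. ms ! i) \<le> mult0 (pullback (j - 1) F))
            \<longleftrightarrow> (\<forall>\<mu>\<in>{1..r}. [:0, 1:] ^ gamma ms \<mu> dvd s \<mu>))
       \<and> ((\<forall>\<mu>\<in>{1..r}. [:0, 1:] ^ gamma ms \<mu> dvd s \<mu>)
            \<longleftrightarrow> (\<forall>(u, a)\<in>levelG ms. dpartial0 u a F = 0))"
proof -
  have r: "sum_list ms = r"
    using assms(1) by (simp add: is_partition_def)
  show ?thesis
    unfolding F_def pullback_multiplicities_iff[OF assms(1)] levelG_dpartial0_curveF_iff[OF r]
      x_power_dvd_iff
    by (meson not_le)
qed

end
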